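(* Let $\psi$ be an $n$-dimensional unique sink orientation and $v \in Q^n$ a vertex whose set of out-neighbors $\mathcal{N}^+(v)$ is already known. Then there is an algorithm that joins the vertices in $\mathcal{N}^+(v)$, i.e. outputs a vertex $w$ such that $u \rightsquigarrow w$ for every $u \in \mathcal{N}^+(v)$, using $|s_\psi(v)|$ many vertex evaluations.
   Context: Let $Q^n = 2^{[n]}$ be the vertex set of the $n$-cube, with $u,v$ adjacent iff $|u\oplus v|=1$; faces are $F_{J,v}=\{u : v\oplus u\subseteq J\}$ for $J\subseteq[n]$. A unique sink orientation (USO) is an orientation of the cube's edges such that every nonempty face has a unique sink (vertex with no outgoing edges within the face). The outmap $s_\psi(v)$ is the set of coordinates $j$ such that the edge $\{v,v\oplus\{j\}\}$ is directed away from $v$. $\mathcal{N}^+(v) = \{v\oplus\{j\} : j\in s_\psi(v)\}$ is the set of out-neighbors of $v$. $u \rightsquigarrow w$ means there is a directed path (possibly of length $0$) from $u$ to $w$. Computation is in the vertex oracle model: a vertex evaluation is a query that, given $v$, returns $s_\psi(v)$. *)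

theory Defs
  imports Main
begin

(* Vertices of Q^n are subsets of {..<n} (coordinates 0..n-1). *)
definition symdiff :: "nat set \<Rightarrow> nat set \<Rightarrow> nat set" where
  "symdiff A B = (A - B) \<union> (B - A)"

definition cube :: "nat \<Rightarrow> nat set set" where
  "cube n = {v. v \<subseteq> {..<n}}"

definition face :: "nat \<Rightarrow> nat set \<Rightarrow> nat set \<Rightarrow> nat set set" where
  "face n J v = {u \<in> cube n. symdiff v u \<subseteq> J}"

(* An orientation of Q^n given by its outmap s: s u is the set of coordinates j
   such that the edge {u, u xor {j}} is directed away from u. *)
definition is_outmap :: "nat \<Rightarrow> (nat set \<Rightarrow> nat set) \<Rightarrow> bool" where
  "is_outmap n s \<longleftrightarrow>
     (\<forall>v \<in> cube n. s v \<subseteq> {..<n}) \<and>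
     (\<forall>v \<in> cube n. \<forall>j < n. j \<in> s v \<longleftrightarrow> j \<notin> s (symdiff v {j}))"

definition is_uso :: "nat \<Rightarrow> (nat set \<Rightarrow> nat set) \<Rightarrow> bool" where
  "is_uso n s \<longleftrightarrow> is_outmap n s \<and>
     (\<forall>J \<subseteq> {..<n}. \<forall>v \<in> cube n. \<exists>!u. u \<in> face n J v \<and> s u \<inter> J = {})"

definition out_nbrs :: "(nat set \<Rightarrow> nat set) \<Rightarrow> nat set \<Rightarrow> nat set set" where
  "out_nbrs s v = {symdiff v {j} | j. j \<in> s v}"

definition arc :: "(nat set \<Rightarrow> nat set) \<Rightarrow> nat set \<Rightarrow> nat set \<Rightarrow> bool" where
  "arc s u w \<longleftrightarrow> (\<exists>j \<in> s u. w = symdiff u {j})"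

definition reaches :: "(nat set \<Rightarrow> nat set) \<Rightarrow> nat set \<Rightarrow> nat set \<Rightarrow> bool" where
  "reaches s u w \<longleftrightarrow> (arc s)\<^sup>*\<^sup>* u w"

(* An algorithm gets as input n, the vertex v and s(v),
   plus the history of (query, answer) pairs so far, and decides either to
   evaluate a further vertex or to output a vertex. *)
datatype step = Query "nat set" | Output "nat set"

type_synonym algorithm =
  "nat \<Rightarrow> nat set \<Rightarrow> nat set \<Rightarrow> (nat set \<times> nat set) list \<Rightarrow> step"

fun exec :: "algorithm \<Rightarrow> nat \<Rightarrow> nat set \<Rightarrow> nat set \<Rightarrow> (nat set \<Rightarrow> nat set)
              \<Rightarrow> nat \<Rightarrow> (nat set \<times> nat set) list \<Rightarrow> (nat set \<times> (nat set \<times> nat set) list) option" where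
  "exec A n v sv s 0 h =
     (case A n v sv h of Output w \<Rightarrow> Some (w, h) | Query q \<Rightarrow> None)"
| "exec A n v sv s (Suc k) h =
     (case A n v sv h of Output w \<Rightarrow> Some (w, h)
        | Query q \<Rightarrow> exec A n v sv s k (h @ [(q, s q)]))"

end

theory Submission
  imports Defs
begin

text \<open>The algorithm evaluates out-neighbours \<open>v \<oplus> {c}\<close> of \<open>v\<close> one at a time, always
  choosing a direction that is outgoing at every neighbour evaluated so far, and stops when
  there is none; it then outputs \<open>v \<oplus> T\<close>, where \<open>T\<close> consists of the evaluated directions
  that are outgoing at every other evaluated neighbour. Each evaluation uses a new direction
  of \<open>s(v)\<close>, which bounds the number of evaluations. Correctness rests on two facts about
  unique sink orientations. In a 2-face, if \<open>b\<close> is not outgoing at \<open>v \<oplus> {a}\<close>, then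
  \<open>v \<oplus> {b} \<leadsto> v \<oplus> {a}\<close>. And since reversing all edges of a set of directions keeps
  the orientation a USO, every face has a unique source, from which \<open>v \<oplus> {t} \<leadsto> v \<oplus> T\<close>
  follows for \<open>t \<in> T\<close>. A direction that was never evaluated is not outgoing at some
  evaluated neighbour, and an evaluated direction outside \<open>T\<close> is not outgoing at some later
  evaluated neighbour; so the first fact leads from every out-neighbour to some \<open>v \<oplus> {t}\<close>
  with \<open>t \<in> T\<close>.\<close>

lemma symdiff_cancel [simp]: "symdiff (symdiff v X) X = v"
  unfolding symdiff_def by blast

lemma symdiff_left_inj: "symdiff v X = symdiff v Y \<Longrightarrow> X = Y"
  unfolding symdiff_def by blast

lemma symdiff_singleton_eq_iff [simp]: "symdiff v {b} = symdiff v {c} \<longleftrightarrow> b = c"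
  using symdiff_left_inj[of v "{b}" "{c}"] by auto

lemma symdiff_in_cube: "v \<in> cube n \<Longrightarrow> X \<subseteq> {..<n} \<Longrightarrow> symdiff v X \<in> cube n"
  unfolding cube_def symdiff_def by blast

lemma uso_outmap_subset: "is_uso n s \<Longrightarrow> v \<in> cube n \<Longrightarrow> s v \<subseteq> {..<n}"
  unfolding is_uso_def is_outmap_def by blast

lemma uso_edge_oriented:
  "is_uso n s \<Longrightarrow> v \<in> cube n \<Longrightarrow> j < n \<Longrightarrow> j \<in> s v \<longleftrightarrow> j \<notin> s (symdiff v {j})"
  unfolding is_uso_def is_outmap_def by blast

lemma reaches_refl: "reaches s u u"
  unfolding reaches_def by simp

lemma reaches_edge: "j \<in> s u \<Longrightarrow> reaches s u (symdiff u {j})"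
  unfolding reaches_def arc_def by blast

lemma reaches_trans: "reaches s u v \<Longrightarrow> reaches s v w \<Longrightarrow> reaches s u w"
  unfolding reaches_def by (rule rtranclp_trans)

definition unique_sinks :: "nat \<Rightarrow> (nat set \<Rightarrow> nat set) \<Rightarrow> bool" where
  "unique_sinks n s \<longleftrightarrow> (\<forall>J \<subseteq> {..<n}. \<forall>v \<in> cube n. \<exists>!u. u \<in> face n J v \<and> s u \<inter> J = {})"

lemma unique_sinksD:
  "unique_sinks n s \<Longrightarrow> J \<subseteq> {..<n} \<Longrightarrow> v \<in> cube n \<Longrightarrow> \<exists>!u. u \<in> face n J v \<and> s u \<inter> J = {}"
  unfolding unique_sinks_def by simp

lemma uso_unique_sinks: "is_uso n s \<Longrightarrow> unique_sinks n s"
  unfolding is_uso_def unique_sinks_def by blast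

lemma unique_sinks_facet_sinks:
  assumes ok: "unique_sinks n s" and K: "K \<subseteq> {..<n}" "j \<in> K" and v: "v \<in> cube n"
  shows "\<exists>a b. a \<noteq> b \<and> {x \<in> face n K v. s x \<inter> (K - {j}) = {}} = {a, b}"
proof -
  let ?K' = "K - {j}" and ?v' = "symdiff v {j}"
  have K': "?K' \<subseteq> {..<n}" and v': "?v' \<in> cube n"
    using K symdiff_in_cube[OF v] by auto
  obtain a where a: "a \<in> face n ?K' v \<and> s a \<inter> ?K' = {}"
    and a_unique: "\<And>x. x \<in> face n ?K' v \<and> s x \<inter> ?K' = {} \<Longrightarrow> x = a"
    using unique_sinksD[OF ok K' v] by metis
  obtain b where b: "b \<in> face n ?K' ?v' \<and> s b \<inter> ?K' = {}"
    and b_unique: "\<And>x. x \<in> face n ?K' ?v' \<and> s x \<inter> ?K' = {} \<Longrightarrow> x = b"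
    using unique_sinksD[OF ok K' v'] by metis
  have split: "face n K v = face n ?K' v \<union> face n ?K' ?v'"
    and disjoint: "face n ?K' v \<inter> face n ?K' ?v' = {}"
    unfolding face_def symdiff_def using K(2) by auto
  have "a \<noteq> b" using a b disjoint by blast
  moreover have "{x \<in> face n K v. s x \<inter> ?K' = {}} = {a, b}"
  proof
    show "{x \<in> face n K v. s x \<inter> ?K' = {}} \<subseteq> {a, b}"
      using split a_unique b_unique by blast
    show "{a, b} \<subseteq> {x \<in> face n K v. s x \<inter> ?K' = {}}"
      using split a b by blast
  qed
  ultimately show ?thesis by (intro exI conjI)
qed

text \<open>In a face containing direction \<open>j\<close>, only the two sinks of its facets avoiding \<open>j\<close>
  can be sinks; exactly one of them is the sink before the reversal, so exactly the other one
  is the sink afterwards.\<close>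

lemma unique_sinks_flip_direction:
  assumes ok: "unique_sinks n s" and j: "j < n"
  shows "unique_sinks n (\<lambda>x. symdiff (s x) {j})"
  unfolding unique_sinks_def
proof (intro allI impI ballI)
  fix K v assume K: "K \<subseteq> {..<n}" and v: "v \<in> cube n"
  show "\<exists>!u. u \<in> face n K v \<and> symdiff (s u) {j} \<inter> K = {}"
  proof (cases "j \<in> K")
    case False
    then have "symdiff (s u) {j} \<inter> K = s u \<inter> K" for u
      by (auto simp: symdiff_def)
    then show ?thesis using unique_sinksD[OF ok K v] by simp
  next
    case True
    obtain a b where "a \<noteq> b" and facet_sinks: "{x \<in> face n K v. s x \<inter> (K - {j}) = {}} = {a, b}"
      using unique_sinks_facet_sinks[OF ok K True v] by (elim exE conjE) (rule that)
    have facet: "u \<in> face n K v \<and> s u \<inter> (K - {j}) = {} \<longleftrightarrow> u = a \<or> u = b" for u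
      using eqset_imp_iff[OF facet_sinks, of u] by simp
    have "s u \<inter> K = {} \<longleftrightarrow> s u \<inter> (K - {j}) = {} \<and> j \<notin> s u"
      and "symdiff (s u) {j} \<inter> K = {} \<longleftrightarrow> s u \<inter> (K - {j}) = {} \<and> j \<in> s u" for u
      using True by (auto simp: symdiff_def)
    then have sinks: "u \<in> face n K v \<and> s u \<inter> K = {} \<longleftrightarrow> (u = a \<or> u = b) \<and> j \<notin> s u"
      and flipped_sinks: "u \<in> face n K v \<and> symdiff (s u) {j} \<inter> K = {} \<longleftrightarrow> (u = a \<or> u = b) \<and> j \<in> s u"
      for u unfolding facet[symmetric] by blast+
    have "j \<in> s a \<longleftrightarrow> j \<notin> s b"
      using unique_sinksD[OF ok K v] \<open>a \<noteq> b\<close> unfolding sinks by blast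
    then show ?thesis
      unfolding flipped_sinks by blast
  qed
qed

lemma unique_sinks_flip:
  assumes "finite X" "X \<subseteq> {..<n}" "unique_sinks n s"
  shows "unique_sinks n (\<lambda>x. symdiff (s x) X)"
  using assms
proof (induction X rule: finite_induct)
  case empty
  then show ?case by (simp add: symdiff_def)
next
  case (insert j X)
  then have "unique_sinks n (\<lambda>x. symdiff (symdiff (s x) X) {j})"
    using unique_sinks_flip_direction by simp
  moreover have "symdiff (symdiff (s x) X) {j} = symdiff (s x) (insert j X)" for x
    using insert(2) by (auto simp: symdiff_def)
  ultimately show ?case by simp
qed

lemma uso_unique_source:
  assumes uso: "is_uso n s" and J: "J \<subseteq> {..<n}" and z: "z \<in> cube n"
    and x: "x \<in> face n J z" "J \<subseteq> s x" and y: "y \<in> face n J z" "J \<subseteq> s y"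
  shows "x = y"
proof -
  have "finite J" using J finite_subset by blast
  then have "unique_sinks n (\<lambda>x. symdiff (s x) J)"
    using unique_sinks_flip J uso_unique_sinks[OF uso] by blast
  then have "\<exists>!u. u \<in> face n J z \<and> symdiff (s u) J \<inter> J = {}"
    using unique_sinksD J z by blast
  moreover have "symdiff (s u) J \<inter> J = {}" if "J \<subseteq> s u" for u
    using that by (auto simp: symdiff_def)
  ultimately show ?thesis using x y by blast
qed

text \<open>In the two-dimensional face spanned by \<open>a\<close> and \<open>b\<close> at \<open>v\<close>, the vertex
  \<open>v \<oplus> {a}\<close> is the sink; so neither \<open>v \<oplus> {b}\<close> nor \<open>v \<oplus> {a, b}\<close> is one, which forces the
  path \<open>v \<oplus> {b} \<rightarrow> v \<oplus> {a, b} \<rightarrow> v \<oplus> {a}\<close>.\<close>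

lemma uso_square_reaches:
  assumes uso: "is_uso n s" and v: "v \<in> cube n" and "a \<noteq> b"
    and a: "a \<in> s v" and b: "b \<in> s v" and b_in: "b \<notin> s (symdiff v {a})"
  shows "reaches s (symdiff v {b}) (symdiff v {a})"
proof -
  have an: "a < n" and bn: "b < n" using uso_outmap_subset[OF uso v] a b by auto
  let ?J = "{a, b}" and ?va = "symdiff v {a}" and ?vb = "symdiff v {b}" and ?vab = "symdiff v {a, b}"
  have J: "?J \<subseteq> {..<n}" using an bn by auto
  have in_face: "symdiff v X \<in> face n ?J v" if "X \<subseteq> ?J" for X
    using symdiff_in_cube[OF v] that J unfolding face_def by (auto simp: symdiff_def)
  have "?va \<in> face n ?J v" "s ?va \<inter> ?J = {}"
    using in_face[of "{a}"] uso_edge_oriented[OF uso v an] a b_in by auto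
  then have only_sink: "u = ?va" if "u \<in> face n ?J v" "s u \<inter> ?J = {}" for u
    using unique_sinksD[OF uso_unique_sinks[OF uso] J v] that by blast
  have "{a, b} \<noteq> {a}" using \<open>a \<noteq> b\<close> by auto
  then have "?vab \<noteq> ?va" using symdiff_left_inj by metis
  then have vab_not_sink: "s ?vab \<inter> ?J \<noteq> {}"
    using only_sink in_face[of "{a, b}"] by blast
  have "?vb \<noteq> ?va" using \<open>a \<noteq> b\<close> by simp
  then have vb_not_sink: "s ?vb \<inter> ?J \<noteq> {}"
    using only_sink in_face[of "{b}"] by blast
  have vb_a: "symdiff ?vb {a} = ?vab" and vab_b: "symdiff ?vab {b} = ?va"
    using \<open>a \<noteq> b\<close> by (auto simp: symdiff_def)
  have "b \<notin> s ?vb" using uso_edge_oriented[OF uso v bn] b by simp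
  then have a_out: "a \<in> s ?vb" using vb_not_sink by blast
  have vb: "?vb \<in> cube n" using symdiff_in_cube[OF v] bn by simp
  have "a \<notin> s ?vab" using uso_edge_oriented[OF uso vb an] a_out vb_a by simp
  then have b_out: "b \<in> s ?vab" using vab_not_sink by blast
  have "reaches s ?vb ?vab" using reaches_edge[of a s ?vb] a_out vb_a by simp
  moreover have "reaches s ?vab ?va" using reaches_edge[of b s ?vab] b_out vab_b by simp
  ultimately show ?thesis by (rule reaches_trans)
qed

text \<open>Let \<open>w = v \<oplus> T\<close>. If some \<open>j \<in> T - {t}\<close> points from \<open>w \<oplus> {j}\<close> to \<open>w\<close>, recurse on
  \<open>T - {j}\<close>. Otherwise \<open>v \<oplus> {t}\<close> and \<open>w\<close> are both sources of the face spanned by \<open>T - {t}\<close>,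
  hence equal, i.e. \<open>T = {t}\<close>.\<close>

lemma uso_reaches_join:
  assumes uso: "is_uso n s" and v: "v \<in> cube n"
    and "T \<subseteq> s v" "\<forall>t\<in>T. T - {t} \<subseteq> s (symdiff v {t})" "t \<in> T"
  shows "reaches s (symdiff v {t}) (symdiff v T)"
  using assms(3-5)
proof (induction "card T" arbitrary: T rule: less_induct)
  case less
  let ?w = "symdiff v T"
  have T: "T \<subseteq> {..<n}" using less.prems(1) uso_outmap_subset[OF uso v] by blast
  have w: "?w \<in> cube n" using symdiff_in_cube[OF v T] .
  show ?case
  proof (cases "\<exists>j \<in> T - {t}. j \<in> s (symdiff ?w {j})")
    case True
    then obtain j where j: "j \<in> T" "j \<noteq> t" and into_w: "j \<in> s (symdiff ?w {j})" by blast
    have "finite T" using T finite_subset by blast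
    then have smaller: "card (T - {j}) < card T" by (rule card_Diff1_less[OF _ j(1)])
    have "T - {j} \<subseteq> s v" "\<forall>t'\<in>T - {j}. T - {j} - {t'} \<subseteq> s (symdiff v {t'})" "t \<in> T - {j}"
      using less.prems j by auto
    then have "reaches s (symdiff v {t}) (symdiff v (T - {j}))"
      by (rule less.hyps[OF smaller])
    moreover have "symdiff v (T - {j}) = symdiff ?w {j}"
      using j(1) by (auto simp: symdiff_def)
    moreover have "reaches s (symdiff ?w {j}) ?w"
      using reaches_edge[of j s "symdiff ?w {j}"] into_w by simp
    ultimately show ?thesis by (metis reaches_trans)
  next
    case False
    let ?J = "T - {t}" and ?vt = "symdiff v {t}"
    have J: "?J \<subseteq> {..<n}" using T by blast
    have vt: "?vt \<in> cube n" using symdiff_in_cube[OF v] T less.prems(3) by blast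
    have "?J \<subseteq> s ?w"
    proof
      fix j assume "j \<in> ?J"
      then show "j \<in> s ?w" using False J uso_edge_oriented[OF uso w, of j] by blast
    qed
    moreover have "?J \<subseteq> s ?vt"
      using less.prems(2,3) by blast
    moreover have "?vt \<in> face n ?J ?vt"
      using vt unfolding face_def symdiff_def by blast
    moreover have "symdiff ?vt ?w = ?J"
      using less.prems(3) by (auto simp: symdiff_def)
    then have "?w \<in> face n ?J ?vt"
      using w unfolding face_def by blast
    ultimately have "?vt = ?w"
      using uso_unique_source[OF uso J vt] by blast
    then have "T = {t}"
      using symdiff_left_inj by metis
    then show ?thesis by (simp add: reaches_refl)
  qed
qed

definition open_dirs :: "nat set \<Rightarrow> nat set \<Rightarrow> (nat set \<times> nat set) list \<Rightarrow> nat set" where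
  "open_dirs v sv h = {b \<in> sv. symdiff v {b} \<notin> fst ` set h \<and> (\<forall>p \<in> set h. b \<in> snd p)}"

definition top_dirs :: "nat set \<Rightarrow> nat set \<Rightarrow> (nat set \<times> nat set) list \<Rightarrow> nat set" where
  "top_dirs v sv h =
     {c \<in> sv. symdiff v {c} \<in> fst ` set h \<and> (\<forall>p \<in> set h. fst p \<noteq> symdiff v {c} \<longrightarrow> c \<in> snd p)}"

definition join_alg :: algorithm where
  "join_alg n v sv h =
     (if open_dirs v sv h \<noteq> {} then Query (symdiff v {Min (open_dirs v sv h)})
      else Output (symdiff v (top_dirs v sv h)))"

definition query_history :: "nat set \<Rightarrow> (nat set \<Rightarrow> nat set) \<Rightarrow> nat list \<Rightarrow> (nat set \<times> nat set) list" where
  "query_history v s cs = map (\<lambda>c. (symdiff v {c}, s (symdiff v {c}))) cs"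

lemma image_fst_query_history:
  "symdiff v {b} \<in> fst ` set (query_history v s cs) \<longleftrightarrow> b \<in> set cs"
  unfolding query_history_def by (simp add: image_image image_iff)

lemma open_dirs_query_history:
  "open_dirs v (s v) (query_history v s cs) =
     {b \<in> s v. b \<notin> set cs \<and> (\<forall>c \<in> set cs. b \<in> s (symdiff v {c}))}"
  unfolding open_dirs_def image_fst_query_history by (simp add: query_history_def)

lemma top_dirs_query_history:
  "top_dirs v (s v) (query_history v s cs) =
     {c \<in> s v. c \<in> set cs \<and> (\<forall>c' \<in> set cs. c' \<noteq> c \<longrightarrow> c \<in> s (symdiff v {c'}))}"
  unfolding top_dirs_def image_fst_query_history by (auto simp: query_history_def)

definition chained_queries :: "nat set \<Rightarrow> (nat set \<Rightarrow> nat set) \<Rightarrow> nat list \<Rightarrow> bool" where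
  "chained_queries v s cs \<longleftrightarrow>
     distinct cs \<and> set cs \<subseteq> s v \<and> sorted_wrt (\<lambda>c d. d \<in> s (symdiff v {c})) cs"

lemma chained_queries_snoc:
  assumes "chained_queries v s cs" "c \<in> open_dirs v (s v) (query_history v s cs)"
  shows "chained_queries v s (cs @ [c])"
  using assms unfolding chained_queries_def open_dirs_query_history by (auto simp: sorted_wrt_append)

lemma open_dirs_exhausted:
  assumes "finite (s v)" "chained_queries v s cs" "card (s v) \<le> length cs"
  shows "open_dirs v (s v) (query_history v s cs) = {}"
proof -
  have "card (set cs) = length cs" "set cs \<subseteq> s v"
    using assms(2) distinct_card unfolding chained_queries_def by auto
  then have "set cs = s v"
    using assms(1,3) card_seteq by metis
  then show ?thesis unfolding open_dirs_query_history by auto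
qed

lemma exec_join_alg:
  assumes fin: "finite (s v)" and "chained_queries v s cs" "card (s v) \<le> length cs + k"
  shows "\<exists>cs'. chained_queries v s cs' \<and> open_dirs v (s v) (query_history v s cs') = {} \<and>
    exec join_alg n v (s v) s k (query_history v s cs) =
      Some (symdiff v (top_dirs v (s v) (query_history v s cs')), query_history v s cs')"
  using assms(2,3)
proof (induction k arbitrary: cs)
  case 0
  then have "open_dirs v (s v) (query_history v s cs) = {}"
    using open_dirs_exhausted[OF fin "0.prems"(1)] by simp
  with 0 show ?case by (auto simp: join_alg_def)
next
  case (Suc k)
  show ?case
  proof (cases "open_dirs v (s v) (query_history v s cs) = {}")
    case True
    with Suc.prems show ?thesis by (auto simp: join_alg_def)
  next
    case False
    define c where "c = Min (open_dirs v (s v) (query_history v s cs))"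
    have "finite (open_dirs v (s v) (query_history v s cs))"
      using fin unfolding open_dirs_def by simp
    then have "c \<in> open_dirs v (s v) (query_history v s cs)"
      using False Min_in unfolding c_def by blast
    then have "chained_queries v s (cs @ [c])"
      using chained_queries_snoc Suc.prems(1) by blast
    moreover have "exec join_alg n v (s v) s (Suc k) (query_history v s cs) =
        exec join_alg n v (s v) s k (query_history v s (cs @ [c]))"
      using False by (simp add: join_alg_def c_def query_history_def)
    ultimately show ?thesis
      using Suc.IH[of "cs @ [c]"] Suc.prems(2) by simp
  qed
qed

lemma chained_queries_reach_top:
  assumes uso: "is_uso n s" and v: "v \<in> cube n" and ch: "chained_queries v s cs"
    and "i < length cs"
  shows "reaches s (symdiff v {cs ! i}) (symdiff v (top_dirs v (s v) (query_history v s cs)))"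
  using assms(4)
proof (induction "length cs - i" arbitrary: i rule: less_induct)
  case less
  let ?T = "top_dirs v (s v) (query_history v s cs)"
  have cs: "set cs \<subseteq> s v" and sorted: "sorted_wrt (\<lambda>c d. d \<in> s (symdiff v {c})) cs"
    using ch unfolding chained_queries_def by auto
  have ci: "cs ! i \<in> s v" using cs less.prems by auto
  show ?case
  proof (cases "cs ! i \<in> ?T")
    case True
    have "?T \<subseteq> s v" and "\<forall>t\<in>?T. ?T - {t} \<subseteq> s (symdiff v {t})"
      unfolding top_dirs_query_history by auto
    with True show ?thesis using uso_reaches_join[OF uso v] by blast
  next
    case False
    then obtain j where j: "j < length cs" "cs ! j \<noteq> cs ! i"
      and not_out: "cs ! i \<notin> s (symdiff v {cs ! j})"
      using ci less.prems unfolding top_dirs_query_history by (auto simp: in_set_conv_nth)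
    have "i < j"
      using sorted_wrt_nth_less[OF sorted, of j i] j not_out less.prems
      by (metis linorder_neqE_nat)
    then have "reaches s (symdiff v {cs ! j}) (symdiff v ?T)"
      using less j(1) by simp
    moreover have "cs ! j \<in> s v" using cs j(1) by auto
    then have "reaches s (symdiff v {cs ! i}) (symdiff v {cs ! j})"
      using uso_square_reaches[OF uso v j(2) _ ci not_out] by blast
    ultimately show ?thesis using reaches_trans by blast
  qed
qed

lemma join_alg_output_reaches:
  assumes uso: "is_uso n s" and v: "v \<in> cube n" and ch: "chained_queries v s cs"
    and closed: "open_dirs v (s v) (query_history v s cs) = {}" and b: "b \<in> s v"
  shows "reaches s (symdiff v {b}) (symdiff v (top_dirs v (s v) (query_history v s cs)))"
proof (cases "b \<in> set cs")
  case True
  then show ?thesis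
    using chained_queries_reach_top[OF uso v ch] by (metis in_set_conv_nth)
next
  case False
  then obtain c where c: "c \<in> set cs" and not_out: "b \<notin> s (symdiff v {c})"
    using closed b unfolding open_dirs_query_history by blast
  then obtain i where i: "i < length cs" "cs ! i = c" by (meson in_set_conv_nth)
  have "c \<in> s v" using ch c unfolding chained_queries_def by auto
  then have "reaches s (symdiff v {b}) (symdiff v {c})"
    using uso_square_reaches[OF uso v _ _ b not_out] False c by blast
  then show ?thesis
    using chained_queries_reach_top[OF uso v ch i(1)] i(2) reaches_trans by blast
qed

theorem lemma5:
  shows "\<exists>A :: algorithm. \<forall>n s v. is_uso n s \<longrightarrow> v \<in> cube n \<longrightarrow>
     (\<exists>w h. exec A n v (s v) s (card (s v)) [] = Some (w, h) \<and> w \<in> cube n \<and>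
            (\<forall>u \<in> out_nbrs s v. reaches s u w))"
proof (intro exI[of _ join_alg] allI impI)
  fix n s v assume uso: "is_uso n s" and v: "v \<in> cube n"
  have sv: "s v \<subseteq> {..<n}" using uso_outmap_subset[OF uso v] .
  then have "finite (s v)" using finite_subset by blast
  then obtain cs where ch: "chained_queries v s cs"
    and closed: "open_dirs v (s v) (query_history v s cs) = {}"
    and run: "exec join_alg n v (s v) s (card (s v)) [] =
      Some (symdiff v (top_dirs v (s v) (query_history v s cs)), query_history v s cs)"
    using exec_join_alg[of s v "[]" "card (s v)" n]
    by (auto simp: chained_queries_def query_history_def)
  have "top_dirs v (s v) (query_history v s cs) \<subseteq> {..<n}"
    using sv unfolding top_dirs_def by auto
  then have "symdiff v (top_dirs v (s v) (query_history v s cs)) \<in> cube n"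
    using symdiff_in_cube[OF v] by blast
  moreover have "\<forall>u \<in> out_nbrs s v. reaches s u (symdiff v (top_dirs v (s v) (query_history v s cs)))"
    unfolding out_nbrs_def using join_alg_output_reaches[OF uso v ch closed] by blast
  ultimately show "\<exists>w h. exec join_alg n v (s v) s (card (s v)) [] = Some (w, h) \<and> w \<in> cube n \<and>
      (\<forall>u \<in> out_nbrs s v. reaches s u w)"
    using run by blast
qed

end
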